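(* Fix $\epsilon>0$, an integer $K\ge 0$ and a weight function $w:\mathbb{R}^{2d}\times\mathbb{R}^{2d}\to[0,\infty)$ such that $\sum_{z'\in\mathcal{S}_{a:b}(z)}w(z,z')>0$ for every $z$ satisfying (R) and all integers $a\le 0\le b$. Consider the following Markov kernel $P$ on $\mathbb{R}^{2d}$ from a current state $z^{\mathrm{curr}}$ satisfying (R): (i) sample $c$ uniformly from $\{0,1,\dots,K\}$ and set $a=-c$, $b=K-c$; (ii) propose $z^{\mathrm{prop}}\in\mathcal{S}_{a:b}(z^{\mathrm{curr}})$ with probability $w(z^{\mathrm{curr}},z^{\mathrm{prop}})/\sum_{z\in\mathcal{S}_{a:b}(z^{\mathrm{curr}})}w(z^{\mathrm{curr}},z)$; (iii) move to $z^{\mathrm{prop}}$ with probability $$\alpha=1\wedge\frac{\tilde\pi(z^{\mathrm{prop}})\,w(z^{\mathrm{prop}},z^{\mathrm{curr}})\sum_{z\in\mathcal{S}_{a:b}(z^{\mathrm{curr}})}w(z^{\mathrm{curr}},z)}{\tilde\pi(z^{\mathrm{curr}})\,w(z^{\mathrm{curr}},z^{\mathrm{prop}})\sum_{z\in\mathcal{S}_{a:b}(z^{\mathrm{curr}})}w(z^{\mathrm{prop}},z)},$$ otherwise stay at $z^{\mathrm{curr}}$. Assume (R) holds for $\tilde\pi$-almost every $z$. Then $P$ satisfies detailed balance with respect to $\tilde\pi$, i.e. $\tilde\pi(\mathrm{d}z)P(z,\mathrm{d}z')=\tilde\pi(\mathrm{d}z')P(z',\mathrm{d}z)$. The same conclusion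 holds for the modified kernel in which, for a fixed $\Delta>0$, the move is automatically rejected (the chain stays at $z^{\mathrm{curr}}$) whenever $\max_{z\in\mathcal{S}_{a:b}(z^{\mathrm{curr}})}H(z)-\min_{z\in\mathcal{S}_{a:b}(z^{\mathrm{curr}})}H(z)\ge\Delta$.
   Context: Let $U:\mathbb{R}^d\to\mathbb{R}$ be continuously differentiable with $\int e^{-U(x)}\,\mathrm{d}x=1$, $\pi(x)=e^{-U(x)}$, let $M$ be a symmetric positive-definite $d\times d$ matrix, $\rho$ the density of $\mathsf{N}(0,M)$, and $\tilde\pi(x,p)=\pi(x)\rho(p)=\exp\{-H(x,p)\}$ with $H(x,p)=U(x)+\tfrac12 p^\top M^{-1}p+\text{const}$. The leapfrog map $\mathsf{LF}_\epsilon:\mathbb{R}^{2d}\to\mathbb{R}^{2d}$ sends $(x,p)$ to $(x_1,p_1)$ where $p'=p-\tfrac{\epsilon}{2}\nabla U(x)$, $x_1=x+\epsilon M^{-1}p'$, $p_1=p'-\tfrac{\epsilon}{2}\nabla U(x_1)$; it is a bijection. For $z_0\in\mathbb{R}^{2d}$ define the orbit $z_l=(x_l,p_l)=\mathsf{LF}_\epsilon^{\,l}(z_0)$, $l\in\mathbb{Z}$, and $h_l=p_l^\top M^{-1}\nabla U(x_l)$. Condition (R) on $z_0$: $l\mapsto z_l$ is injective, $h_l\neq0$ for all $l$, and there are infinitely many $l\ge0$ and infinitely many $l<0$ with $h_l>0$ and $h_{l+1}<0$. An apogee lies between indices $l$ and $l+1$ iff $h_l>0$ and $h_{l+1}<0$.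 The apogees partition $\mathbb{Z}$ into maximal blocks of consecutive integers containing no apogee between consecutive members; the time-ordered list of orbit points indexed by such a block is a segment. $\mathcal{S}_0(z_0)$ is the segment containing index $0$, $\mathcal{S}_j(z_0)$ for $j>0$ ($j<0$) is the $j$-th segment after (the $|j|$-th segment before) it, and for integers $a\le b$, $\mathcal{S}_{a:b}(z_0)$ is the time-ordered concatenation of $\mathcal{S}_a(z_0),\dots,\mathcal{S}_b(z_0)$. For $z'$ in $\mathcal{S}_{a:b}(z_0)$, $\mathcal{S}_\#(z';z_0)$ denotes the integer $j$ with $z'\in\mathcal{S}_j(z_0)$. *)

theory Defs
  imports "HOL-Analysis.Analysis" "HOL-Probability.Probability"
begin

type_synonym 'n state = "(real^'n) \<times> (real^'n)"

definition LF :: "real \<Rightarrow> real^'n^'n \<Rightarrow> (real^'n \<Rightarrow> real^'n) \<Rightarrow> 'n state \<Rightarrow> 'n state" where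
  "LF eps M gradU z =
     (let x = fst z; p = snd z;
          p' = p - (eps / 2) *\<^sub>R gradU x;
          x1 = x + eps *\<^sub>R (matrix_inv M *v p');
          p1 = p' - (eps / 2) *\<^sub>R gradU x1
      in (x1, p1))"

definition orbit :: "real \<Rightarrow> real^'n^'n \<Rightarrow> (real^'n \<Rightarrow> real^'n) \<Rightarrow> 'n state \<Rightarrow> int \<Rightarrow> 'n state" where
  "orbit eps M gradU z0 l =
     (if 0 \<le> l then (LF eps M gradU ^^ nat l) z0
      else (inv (LF eps M gradU) ^^ nat (- l)) z0)"

definition hval :: "real \<Rightarrow> real^'n^'n \<Rightarrow> (real^'n \<Rightarrow> real^'n) \<Rightarrow> 'n state \<Rightarrow> int \<Rightarrow> real" where
  "hval eps M gradU z0 l =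
     (let z = orbit eps M gradU z0 l in snd z \<bullet> (matrix_inv M *v gradU (fst z)))"

text \<open>An apogee lies between indices l and l+1.\<close>
definition apogee :: "real \<Rightarrow> real^'n^'n \<Rightarrow> (real^'n \<Rightarrow> real^'n) \<Rightarrow> 'n state \<Rightarrow> int \<Rightarrow> bool" where
  "apogee eps M gradU z0 l \<longleftrightarrow> hval eps M gradU z0 l > 0 \<and> hval eps M gradU z0 (l + 1) < 0"

definition condR :: "real \<Rightarrow> real^'n^'n \<Rightarrow> (real^'n \<Rightarrow> real^'n) \<Rightarrow> 'n state \<Rightarrow> bool" where
  "condR eps M gradU z0 \<longleftrightarrow>
     inj (orbit eps M gradU z0) \<and> (\<forall>l. hval eps M gradU z0 l \<noteq> 0) \<and>
     infinite {l. 0 \<le> l \<and> apogee eps M gradU z0 l} \<and>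
     infinite {l. l < 0 \<and> apogee eps M gradU z0 l}"

text \<open>Index of the segment containing orbit index l: the signed number of apogees
  between index 0 and index l (so the segment containing 0 has index 0).\<close>
definition seg_index :: "real \<Rightarrow> real^'n^'n \<Rightarrow> (real^'n \<Rightarrow> real^'n) \<Rightarrow> 'n state \<Rightarrow> int \<Rightarrow> int" where
  "seg_index eps M gradU z0 l =
     (if 0 \<le> l then int (card {k. 0 \<le> k \<and> k < l \<and> apogee eps M gradU z0 k})
      else - int (card {k. l \<le> k \<and> k < 0 \<and> apogee eps M gradU z0 k}))"

definition segment :: "real \<Rightarrow> real^'n^'n \<Rightarrow> (real^'n \<Rightarrow> real^'n) \<Rightarrow> 'n state \<Rightarrow> int \<Rightarrow> 'n state set" where
  "segment eps M gradU z0 j = orbit eps M gradU z0 ` {l. seg_index eps M gradU z0 l = j}"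

definition segs :: "real \<Rightarrow> real^'n^'n \<Rightarrow> (real^'n \<Rightarrow> real^'n) \<Rightarrow> 'n state \<Rightarrow> int \<Rightarrow> int \<Rightarrow> 'n state set" where
  "segs eps M gradU z0 a b = (\<Union>j\<in>{a..b}. segment eps M gradU z0 j)"

definition rho :: "real^'n^'n \<Rightarrow> real^'n \<Rightarrow> real" where
  "rho M p = exp (- (p \<bullet> (matrix_inv M *v p)) / 2) / sqrt ((2 * pi) ^ CARD('n) * det M)"

definition pit :: "real^'n^'n \<Rightarrow> (real^'n \<Rightarrow> real) \<Rightarrow> 'n state \<Rightarrow> real" where
  "pit M U z = exp (- U (fst z)) * rho M (snd z)"

definition Ham :: "real^'n^'n \<Rightarrow> (real^'n \<Rightarrow> real) \<Rightarrow> 'n state \<Rightarrow> real" where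
  "Ham M U z = U (fst z) + (snd z \<bullet> (matrix_inv M *v snd z)) / 2
               + ln (sqrt ((2 * pi) ^ CARD('n) * det M))"

definition pit_measure :: "real^'n^'n \<Rightarrow> (real^'n \<Rightarrow> real) \<Rightarrow> 'n state measure" where
  "pit_measure M U = density lborel (\<lambda>z. ennreal (pit M U z))"

definition prop_pmf :: "('a \<Rightarrow> 'a \<Rightarrow> real) \<Rightarrow> 'a set \<Rightarrow> 'a \<Rightarrow> 'a pmf" where
  "prop_pmf w S z = embed_pmf (\<lambda>z'. if z' \<in> S then w z z' / (\<Sum>y\<in>S. w z y) else 0)"

definition accept_prob :: "real^'n^'n \<Rightarrow> (real^'n \<Rightarrow> real) \<Rightarrow> ('n state \<Rightarrow> 'n state \<Rightarrow> real)
    \<Rightarrow> 'n state set \<Rightarrow> 'n state \<Rightarrow> 'n state \<Rightarrow> real" where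
  "accept_prob M U w S z z' =
     min 1 ((pit M U z' * w z' z * (\<Sum>y\<in>S. w z y)) / (pit M U z * w z z' * (\<Sum>y\<in>S. w z' y)))"

definition mh_step :: "real^'n^'n \<Rightarrow> (real^'n \<Rightarrow> real) \<Rightarrow> ('n state \<Rightarrow> 'n state \<Rightarrow> real)
    \<Rightarrow> 'n state set \<Rightarrow> 'n state \<Rightarrow> 'n state pmf" where
  "mh_step M U w S z =
     bind_pmf (prop_pmf w S z) (\<lambda>z'.
     bind_pmf (bernoulli_pmf (accept_prob M U w S z z')) (\<lambda>acc.
     return_pmf (if acc then z' else z)))"

text \<open>The kernel P (states violating (R), a null set, are left fixed).\<close>
definition apogee_kernel :: "real \<Rightarrow> real^'n^'n \<Rightarrow> (real^'n \<Rightarrow> real) \<Rightarrow> (real^'n \<Rightarrow> real^'n)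
    \<Rightarrow> nat \<Rightarrow> ('n state \<Rightarrow> 'n state \<Rightarrow> real) \<Rightarrow> 'n state \<Rightarrow> 'n state pmf" where
  "apogee_kernel eps M U gradU K w z =
     (if condR eps M gradU z then
        bind_pmf (pmf_of_set {0..K}) (\<lambda>c.
          mh_step M U w (segs eps M gradU z (- int c) (int K - int c)) z)
      else return_pmf z)"

definition apogee_kernel_cutoff :: "real \<Rightarrow> real^'n^'n \<Rightarrow> (real^'n \<Rightarrow> real) \<Rightarrow> (real^'n \<Rightarrow> real^'n)
    \<Rightarrow> nat \<Rightarrow> ('n state \<Rightarrow> 'n state \<Rightarrow> real) \<Rightarrow> real \<Rightarrow> 'n state \<Rightarrow> 'n state pmf" where
  "apogee_kernel_cutoff eps M U gradU K w Delta z =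
     (if condR eps M gradU z then
        bind_pmf (pmf_of_set {0..K}) (\<lambda>c.
          (let S = segs eps M gradU z (- int c) (int K - int c) in
           if Max (Ham M U ` S) - Min (Ham M U ` S) \<ge> Delta then return_pmf z
           else mh_step M U w S z))
      else return_pmf z)"

definition detailed_balance :: "'a measure \<Rightarrow> ('a \<Rightarrow> 'a pmf) \<Rightarrow> bool" where
  "detailed_balance mu P \<longleftrightarrow>
     (\<forall>A\<in>sets mu. \<forall>B\<in>sets mu.
        (\<integral>\<^sup>+ z. indicator A z * emeasure (measure_pmf (P z)) B \<partial>mu) =
        (\<integral>\<^sup>+ z. indicator B z * emeasure (measure_pmf (P z)) A \<partial>mu))"

end

theory Submission
  imports Defs
begin

text \<open>The leapfrog map is a composition of three shears (kick, drift, kick), hence a continuous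
  bijection preserving Lebesgue measure, and so is every iterate \<open>z \<mapsto> z\<^sub>l\<close>. Both kernels move
  a state only along its own orbit, and the segment structure is covariant under such moves:
  the segments of \<open>z\<^sub>l\<close> are those of \<open>z\<close>, renumbered by the index \<open>j\<close> of the segment containing
  \<open>z\<^sub>l\<close>. Thus the window \<open>S_{-c:K-c}(z)\<close> is the window with offset \<open>c + j\<close> around \<open>z\<^sub>l\<close>,
  and since \<open>c\<close> is uniform and Metropolis--Hastings on one fixed finite window is reversible,
  \<open>\<pi>(z) P(z, z\<^sub>l) = \<pi>(z\<^sub>l) P(z\<^sub>l, z)\<close>. Summing over \<open>l\<close> and substituting \<open>z \<mapsto> z\<^sub>l\<close> in the
  integral gives detailed balance. The energy cutoff depends only on the window, which is the
  same seen from both ends of a move.\<close>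

section \<open>Leapfrog as a composition of shears\<close>

definition kick :: "('a \<Rightarrow> 'b::plus) \<Rightarrow> 'a \<times> 'b \<Rightarrow> 'a \<times> 'b" where
  "kick f z = (fst z, snd z + f (fst z))"

definition drift :: "('b \<Rightarrow> 'a::plus) \<Rightarrow> 'a \<times> 'b \<Rightarrow> 'a \<times> 'b" where
  "drift g z = (fst z + g (snd z), snd z)"

lemma drift_eq_swap_kick_swap: "drift g = prod.swap \<circ> kick g \<circ> prod.swap"
  by (simp add: fun_eq_iff drift_def kick_def)

lemma continuous_on_kick:
  "continuous_on UNIV f \<Longrightarrow>
    continuous_on UNIV (kick f :: 'a::topological_space \<times> 'b::topological_monoid_add \<Rightarrow> _)"
  unfolding kick_def[abs_def]
  by (intro continuous_intros continuous_on_compose2[of UNIV f _ fst]) auto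

lemma continuous_on_drift:
  "continuous_on UNIV g \<Longrightarrow>
    continuous_on UNIV (drift g :: 'a::topological_monoid_add \<times> 'b::topological_space \<Rightarrow> _)"
  unfolding drift_def[abs_def]
  by (intro continuous_intros continuous_on_compose2[of UNIV g _ snd]) auto

lemma distr_lborel_comp:
  fixes T :: "'a::euclidean_space \<Rightarrow> 'b::euclidean_space" and S :: "'b \<Rightarrow> 'c::euclidean_space"
  assumes "distr lborel borel T = lborel" "distr lborel borel S = lborel"
    and "T \<in> borel_measurable borel" "S \<in> borel_measurable borel"
  shows "distr lborel borel (S \<circ> T) = lborel"
proof -
  have "distr lborel borel (S \<circ> T) = distr (distr lborel borel T) borel S"
    using assms(3,4) by (simp add: distr_distr)
  with assms(1,2) show ?thesis by simp
qed

lemma distr_lborel_swap: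
  "distr lborel borel prod.swap = (lborel :: ('a::euclidean_space \<times> 'b::euclidean_space) measure)"
proof -
  have "distr (lborel \<Otimes>\<^sub>M lborel) (lborel \<Otimes>\<^sub>M lborel) (\<lambda>(x, y). (y, x))
      = (lborel \<Otimes>\<^sub>M lborel :: ('a \<times> 'b) measure)"
    by (rule lborel_pair.distr_pair_swap[symmetric])
  moreover have "distr lborel borel prod.swap
      = (distr lborel lborel (\<lambda>(x, y). (y, x)) :: ('a \<times> 'b) measure)"
    by (rule distr_cong) auto
  ultimately show ?thesis
    by (simp add: lborel_prod)
qed

lemma nn_integral_lborel_prod:
  fixes h :: "'a::euclidean_space \<times> 'b::euclidean_space \<Rightarrow> ennreal"
  assumes [measurable]: "h \<in> borel_measurable borel"
  shows "(\<integral>\<^sup>+ z. h z \<partial>lborel) = (\<integral>\<^sup>+ x. \<integral>\<^sup>+ p. h (x, p) \<partial>lborel \<partial>lborel)"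
proof -
  have "h \<in> borel_measurable (lborel \<Otimes>\<^sub>M lborel)"
    by (simp add: lborel_prod)
  then have "(\<integral>\<^sup>+ x. \<integral>\<^sup>+ p. h (x, p) \<partial>lborel \<partial>lborel) = integral\<^sup>N (lborel \<Otimes>\<^sub>M lborel) h"
    by (rule lborel.nn_integral_fst)
  then show ?thesis
    by (simp add: lborel_prod)
qed

lemma nn_integral_lborel_translate:
  fixes g :: "'a::euclidean_space \<Rightarrow> ennreal"
  assumes [measurable]: "g \<in> borel_measurable borel"
  shows "(\<integral>\<^sup>+ p. g (p + c) \<partial>lborel) = (\<integral>\<^sup>+ p. g p \<partial>lborel)"
proof -
  have "(\<integral>\<^sup>+ p. g p \<partial>lborel) = (\<integral>\<^sup>+ p. g p \<partial>distr lborel borel ((+) c))"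
    by (simp add: lborel_distr_plus)
  also have "\<dots> = (\<integral>\<^sup>+ p. g (p + c) \<partial>lborel)"
    by (subst nn_integral_distr) (auto simp: add.commute)
  finally show ?thesis by simp
qed

lemma distr_kick_lborel:
  fixes f :: "'a::euclidean_space \<Rightarrow> 'b::euclidean_space"
  assumes f: "continuous_on UNIV f"
  shows "distr lborel borel (kick f) = lborel"
proof (rule measure_eqI)
  have [measurable]: "f \<in> borel_measurable borel" "kick f \<in> borel_measurable borel"
    using f continuous_on_kick[OF f] by (auto intro: borel_measurable_continuous_onI)
  fix A :: "('a \<times> 'b) set"
  assume "A \<in> sets (distr lborel borel (kick f))"
  then have [measurable]: "A \<in> sets borel" by simp
  have "emeasure (distr lborel borel (kick f)) A
      = (\<integral>\<^sup>+ z. indicator A z \<partial>distr lborel borel (kick f))"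
    by simp
  also have "\<dots> = (\<integral>\<^sup>+ z. indicator A (kick f z) \<partial>lborel)"
    by (rule nn_integral_distr) auto
  also have "\<dots> = (\<integral>\<^sup>+ x. \<integral>\<^sup>+ p. indicator A (x, p + f x) \<partial>lborel \<partial>lborel)"
  proof -
    have "(\<lambda>z. indicator A (kick f z) :: ennreal) \<in> borel_measurable borel"
      by measurable
    from nn_integral_lborel_prod[OF this] show ?thesis
      by (simp add: kick_def)
  qed
  also have "\<dots> = (\<integral>\<^sup>+ x. \<integral>\<^sup>+ p. indicator A (x, p) \<partial>lborel \<partial>lborel)"
    by (rule nn_integral_cong, rule nn_integral_lborel_translate) simp
  also have "\<dots> = emeasure lborel A"
    by (subst nn_integral_lborel_prod[symmetric]) auto
  finally show "emeasure (distr lborel borel (kick f)) A = emeasure lborel A" .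
qed simp

lemma distr_drift_lborel:
  fixes g :: "'b::euclidean_space \<Rightarrow> 'a::euclidean_space"
  assumes g: "continuous_on UNIV g"
  shows "distr lborel borel (drift g) = lborel"
proof -
  note swap = borel_measurable_continuous_onI[OF continuous_on_swap]
  have kick: "kick g \<in> borel_measurable borel"
    by (intro borel_measurable_continuous_onI continuous_on_kick g)
  have "distr lborel borel (kick g \<circ> prod.swap) = (lborel :: ('b \<times> 'a) measure)"
    by (rule distr_lborel_comp[OF distr_lborel_swap distr_kick_lborel[OF g] swap kick])
  from distr_lborel_comp[OF this distr_lborel_swap measurable_comp[OF swap kick] swap]
  show ?thesis
    by (simp add: drift_eq_swap_kick_swap comp_assoc)
qed

lemma LF_eq_kick_drift:
  "LF eps M gradU
    = kick (\<lambda>x. (- eps / 2) *\<^sub>R gradU x) \<circ> drift (\<lambda>p. eps *\<^sub>R (matrix_inv M *v p))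
      \<circ> kick (\<lambda>x. (- eps / 2) *\<^sub>R gradU x)"
  by (simp add: fun_eq_iff LF_def kick_def drift_def Let_def)

lemma inv_LF_eq_kick_drift:
  "inv (LF eps M gradU)
    = kick (\<lambda>x. (eps / 2) *\<^sub>R gradU x) \<circ> drift (\<lambda>p. (- eps) *\<^sub>R (matrix_inv M *v p))
      \<circ> kick (\<lambda>x. (eps / 2) *\<^sub>R gradU x)"
  by (rule inv_equality) (simp_all add: LF_def kick_def drift_def Let_def)

lemma LF_inv_LF: "LF eps M gradU (inv (LF eps M gradU) z) = z"
  by (simp add: inv_LF_eq_kick_drift LF_def kick_def drift_def Let_def)

lemma inv_LF_LF: "inv (LF eps M gradU) (LF eps M gradU z) = z"
  by (simp add: inv_LF_eq_kick_drift LF_def kick_def drift_def Let_def)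

definition continuous_lborel_preserving :: "('a::euclidean_space \<Rightarrow> 'a) \<Rightarrow> bool" where
  "continuous_lborel_preserving T \<longleftrightarrow> continuous_on UNIV T \<and> distr lborel borel T = lborel"

lemma continuous_lborel_preserving_id: "continuous_lborel_preserving (\<lambda>z. z)"
  by (simp add: continuous_lborel_preserving_def distr_id2)

lemma continuous_lborel_preserving_comp:
  assumes "continuous_lborel_preserving S" "continuous_lborel_preserving T"
  shows "continuous_lborel_preserving (S \<circ> T)"
  using assms distr_lborel_comp[of T S] continuous_on_compose[of UNIV T S]
    continuous_on_subset[of UNIV S "range T"]
  by (auto simp: continuous_lborel_preserving_def borel_measurable_continuous_onI)

lemma continuous_lborel_preserving_LF:
  fixes gradU :: "real^'n \<Rightarrow> real^'n"
  assumes "continuous_on UNIV gradU"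
  shows "continuous_lborel_preserving (LF eps M gradU)"
    and "continuous_lborel_preserving (inv (LF eps M gradU))"
proof -
  have "continuous_on UNIV (\<lambda>x. c *\<^sub>R gradU x)" "continuous_on UNIV (\<lambda>p. c *\<^sub>R (matrix_inv M *v p))"
    for c
    using linear_continuous_on[OF matrix_vector_mul_bounded_linear, of UNIV "matrix_inv M"]
    by (auto intro!: continuous_intros assms)
  then have kick: "continuous_lborel_preserving (kick (\<lambda>x. c *\<^sub>R gradU x))"
    and drift: "continuous_lborel_preserving (drift (\<lambda>p. c *\<^sub>R (matrix_inv M *v p)))" for c
    by (simp_all add: continuous_lborel_preserving_def continuous_on_kick continuous_on_drift
        distr_kick_lborel distr_drift_lborel)
  show "continuous_lborel_preserving (LF eps M gradU)"
    unfolding LF_eq_kick_drift by (intro continuous_lborel_preserving_comp kick drift)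
  show "continuous_lborel_preserving (inv (LF eps M gradU))"
    unfolding inv_LF_eq_kick_drift by (intro continuous_lborel_preserving_comp kick drift)
qed

lemma orbit_0 [simp]: "orbit eps M gradU z 0 = z"
  by (simp add: orbit_def)

lemma orbit_add_1: "orbit eps M gradU z (l + 1) = LF eps M gradU (orbit eps M gradU z l)"
proof (cases "0 \<le> l")
  case True
  then have "nat (l + 1) = Suc (nat l)" by simp
  with True show ?thesis by (simp add: orbit_def)
next
  case False
  then consider "l = -1" | "nat (- l) = Suc (nat (- (l + 1)))" by linarith
  then show ?thesis
    using False by cases (simp_all add: orbit_def LF_inv_LF)
qed

lemma orbit_diff_1: "orbit eps M gradU z (l - 1) = inv (LF eps M gradU) (orbit eps M gradU z l)"
  using orbit_add_1[of eps M gradU z "l - 1"] by (simp add: inv_LF_LF)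

lemma orbit_orbit: "orbit eps M gradU (orbit eps M gradU z l) k = orbit eps M gradU z (k + l)"
proof (induction k rule: int_induct[where k=0])
  case (step1 i)
  then show ?case by (metis orbit_add_1 add.commute add.left_commute)
next
  case (step2 i)
  then show ?case by (metis orbit_diff_1 add.commute diff_add_eq)
qed simp

lemma continuous_lborel_preserving_orbit:
  assumes "continuous_on UNIV gradU"
  shows "continuous_lborel_preserving (\<lambda>z. orbit eps M gradU z l)"
proof (induction l rule: int_induct[where k=0])
  case base
  then show ?case by (simp add: continuous_lborel_preserving_id)
next
  case (step1 i)
  from continuous_lborel_preserving_comp[OF continuous_lborel_preserving_LF(1)[OF assms] step1(2)]
  show ?case
    by (simp add: orbit_add_1 comp_def)
next
  case (step2 i)
  from continuous_lborel_preserving_comp[OF continuous_lborel_preserving_LF(2)[OF assms] step2(2)]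
  show ?case
    by (simp add: orbit_diff_1 comp_def)
qed

lemma continuous_on_orbit:
  "continuous_on UNIV gradU \<Longrightarrow> continuous_on UNIV (\<lambda>z. orbit eps M gradU z l)"
  using continuous_lborel_preserving_orbit by (auto simp: continuous_lborel_preserving_def)

lemma nn_integral_orbit:
  assumes "continuous_on UNIV gradU" and h: "h \<in> borel_measurable borel"
  shows "(\<integral>\<^sup>+ z. h (orbit eps M gradU z l) \<partial>lborel) = (\<integral>\<^sup>+ z. h z \<partial>lborel)"
proof -
  have "continuous_on UNIV (\<lambda>z. orbit eps M gradU z l)"
    and distr: "distr lborel borel (\<lambda>z. orbit eps M gradU z l) = lborel"
    using continuous_lborel_preserving_orbit[OF assms(1)]
    by (auto simp: continuous_lborel_preserving_def)
  then have "(\<integral>\<^sup>+ z. h z \<partial>distr lborel borel (\<lambda>z. orbit eps M gradU z l))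
      = (\<integral>\<^sup>+ z. h (orbit eps M gradU z l) \<partial>lborel)"
    using h by (intro nn_integral_distr) (auto intro: borel_measurable_continuous_onI)
  then show ?thesis
    by (simp add: distr)
qed

lemma hval_orbit: "hval eps M gradU (orbit eps M gradU z l) k = hval eps M gradU z (k + l)"
  by (simp add: hval_def orbit_orbit)

lemma apogee_orbit: "apogee eps M gradU (orbit eps M gradU z l) k = apogee eps M gradU z (k + l)"
  by (simp add: apogee_def hval_orbit algebra_simps)

section \<open>Segment indices along an orbit\<close>

definition signed_count :: "(int \<Rightarrow> bool) \<Rightarrow> int \<Rightarrow> int" where
  "signed_count P l = (if 0 \<le> l then int (card {k. 0 \<le> k \<and> k < l \<and> P k})
      else - int (card {k. l \<le> k \<and> k < 0 \<and> P k}))"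

lemma seg_index_eq_signed_count: "seg_index eps M gradU z = signed_count (apogee eps M gradU z)"
  by (simp add: fun_eq_iff seg_index_def signed_count_def)

lemma signed_count_0 [simp]: "signed_count P 0 = 0"
  by (simp add: signed_count_def card_eq_0_iff)

lemma signed_count_nonpos:
  "l \<le> 0 \<Longrightarrow> signed_count P l = - int (card {k. l \<le> k \<and> k < 0 \<and> P k})"
  by (cases "l = 0") (auto simp: signed_count_def card_eq_0_iff)

lemma signed_count_add_1: "signed_count P (l + 1) = signed_count P l + of_bool (P l)"
proof (cases "0 \<le> l")
  case True
  have "finite {k. 0 \<le> k \<and> k < l \<and> P k}"
    by (rule finite_subset[of _ "{0..<l}"]) auto
  moreover have "{k. 0 \<le> k \<and> k < l + 1 \<and> P k}
      = {k. 0 \<le> k \<and> k < l \<and> P k} \<union> (if P l then {l} else {})"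
    using True by (auto simp: le_less)
  ultimately show ?thesis
    using True by (auto simp: signed_count_def)
next
  case False
  have "finite {k. l + 1 \<le> k \<and> k < 0 \<and> P k}"
    by (rule finite_subset[of _ "{l+1..<0}"]) auto
  moreover have "{k. l \<le> k \<and> k < 0 \<and> P k}
      = {k. l + 1 \<le> k \<and> k < 0 \<and> P k} \<union> (if P l then {l} else {})"
    using False by (auto simp: add1_zle_eq le_less)
  ultimately show ?thesis
    using False signed_count_nonpos[of l P] signed_count_nonpos[of "l + 1" P] by auto
qed

lemma signed_count_shift:
  "signed_count (\<lambda>k. P (k + l)) k = signed_count P (k + l) - signed_count P l"
proof (induction k rule: int_induct[where k=0])
  case (step1 i)
  then show ?case
    using signed_count_add_1[of "\<lambda>k. P (k + l)" i] signed_count_add_1[of P "i + l"]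
    by (simp add: algebra_simps)
next
  case (step2 i)
  then show ?case
    using signed_count_add_1[of "\<lambda>k. P (k + l)" "i - 1"] signed_count_add_1[of P "i - 1 + l"]
    by (simp add: algebra_simps)
qed simp

lemma signed_count_mono: "i \<le> j \<Longrightarrow> signed_count P i \<le> signed_count P j"
proof (induction j rule: int_ge_induct)
  case (step j)
  then show ?case using signed_count_add_1[of P j] by simp
qed simp

lemma signed_count_unbounded_above:
  assumes "infinite {l. 0 \<le> l \<and> P l}"
  obtains N where "b < signed_count P N"
proof -
  obtain B where B: "B \<subseteq> {l. 0 \<le> l \<and> P l}" "finite B" "card B = nat (b + 1)"
    using infinite_arbitrarily_large[OF assms] by blast
  define N where "N = Max (insert 0 B) + 1"
  have "B \<subseteq> {k. 0 \<le> k \<and> k < N \<and> P k}"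
    using B Max_ge[of "insert 0 B"] unfolding N_def by force
  moreover have "finite {k. 0 \<le> k \<and> k < N \<and> P k}"
    by (rule finite_subset[of _ "{0..<N}"]) auto
  ultimately have "card B \<le> card {k. 0 \<le> k \<and> k < N \<and> P k}"
    by (rule card_mono[rotated])
  moreover have "0 \<le> N"
    using B(2) Max_ge[of "insert 0 B" 0] unfolding N_def by simp
  ultimately show ?thesis
    using B(3) by (intro that[of N]) (simp add: signed_count_def)
qed

lemma signed_count_unbounded_below:
  assumes "infinite {l. l < 0 \<and> P l}"
  obtains N where "signed_count P N < a"
proof -
  obtain B where B: "B \<subseteq> {l. l < 0 \<and> P l}" "finite B" "card B = nat (1 - a)"
    using infinite_arbitrarily_large[OF assms] by blast
  define N where "N = Min (insert 0 B)"
  have "B \<subseteq> {k. N \<le> k \<and> k < 0 \<and> P k}"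
    using B Min_le[of "insert 0 B"] unfolding N_def by force
  moreover have "finite {k. N \<le> k \<and> k < 0 \<and> P k}"
    by (rule finite_subset[of _ "{N..<0}"]) auto
  ultimately have "card B \<le> card {k. N \<le> k \<and> k < 0 \<and> P k}"
    by (rule card_mono[rotated])
  moreover have "N \<le> 0"
    using B(2) Min_le[of "insert 0 B" 0] unfolding N_def by simp
  ultimately show ?thesis
    using B(3) by (intro that[of N]) (simp add: signed_count_nonpos)
qed

lemma finite_signed_count_band:
  assumes "infinite {l. 0 \<le> l \<and> P l}" "infinite {l. l < 0 \<and> P l}"
  shows "finite {l. a \<le> signed_count P l \<and> signed_count P l \<le> b}"
proof -
  obtain N1 where N1: "b < signed_count P N1"
    using signed_count_unbounded_above[OF assms(1)] .
  obtain N0 where N0: "signed_count P N0 < a"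
    using signed_count_unbounded_below[OF assms(2)] .
  have "l \<in> {N0..N1}" if "a \<le> signed_count P l" "signed_count P l \<le> b" for l
  proof -
    have "\<not> l < N0"
      using signed_count_mono[of l N0 P] N0 that by auto
    moreover have "\<not> N1 < l"
      using signed_count_mono[of N1 l P] N1 that by auto
    ultimately show ?thesis
      by simp
  qed
  then have "{l. a \<le> signed_count P l \<and> signed_count P l \<le> b} \<subseteq> {N0..N1}"
    by blast
  then show ?thesis
    by (rule finite_subset) simp
qed

lemma infinite_nonneg_int_iff: "infinite {k::int. 0 \<le> k \<and> Q k} \<longleftrightarrow> (\<forall>N. \<exists>k\<ge>N. Q k)"
proof
  assume "infinite {k::int. 0 \<le> k \<and> Q k}"
  then show "\<forall>N. \<exists>k\<ge>N. Q k"
    unfolding infinite_int_iff_unbounded_le by (metis abs_of_nonneg mem_Collect_eq)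
next
  assume unbounded: "\<forall>N. \<exists>k\<ge>N. Q k"
  show "infinite {k::int. 0 \<le> k \<and> Q k}"
    unfolding infinite_int_iff_unbounded_le
  proof
    fix m :: int
    obtain k where "k \<ge> max m 0" "Q k"
      using unbounded by blast
    then show "\<exists>n. m \<le> \<bar>n\<bar> \<and> n \<in> {k. 0 \<le> k \<and> Q k}"
      by (intro exI[of _ k]) auto
  qed
qed

lemma infinite_neg_int_iff: "infinite {k::int. k < 0 \<and> Q k} \<longleftrightarrow> (\<forall>N. \<exists>k\<le>N. Q k)"
proof
  assume "infinite {k::int. k < 0 \<and> Q k}"
  then show "\<forall>N. \<exists>k\<le>N. Q k"
    unfolding infinite_int_iff_unbounded_le
    by (metis (no_types, lifting) abs_of_neg mem_Collect_eq neg_le_iff_le)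
next
  assume unbounded: "\<forall>N. \<exists>k\<le>N. Q k"
  show "infinite {k::int. k < 0 \<and> Q k}"
    unfolding infinite_int_iff_unbounded_le
  proof
    fix m :: int
    obtain k where "k \<le> min (- m) (-1)" "Q k"
      using unbounded by blast
    then show "\<exists>n. m \<le> \<bar>n\<bar> \<and> n \<in> {k. k < 0 \<and> Q k}"
      by (intro exI[of _ k]) auto
  qed
qed

lemma condR_iff_unbounded_apogees:
  "condR eps M gradU z \<longleftrightarrow>
     inj (orbit eps M gradU z) \<and> (\<forall>l. hval eps M gradU z l \<noteq> 0) \<and>
     (\<forall>N. \<exists>k\<ge>N. apogee eps M gradU z k) \<and> (\<forall>N. \<exists>k\<le>N. apogee eps M gradU z k)"
  unfolding condR_def infinite_nonneg_int_iff infinite_neg_int_iff ..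

lemma condR_orbit: "condR eps M gradU (orbit eps M gradU z l) \<longleftrightarrow> condR eps M gradU z"
proof -
  have "inj (\<lambda>k. orbit eps M gradU z (k + l)) \<longleftrightarrow> inj (orbit eps M gradU z)"
    unfolding inj_def by (metis add_right_cancel diff_add_cancel)
  moreover have "(\<forall>k. hval eps M gradU z (k + l) \<noteq> 0) \<longleftrightarrow> (\<forall>k. hval eps M gradU z k \<noteq> 0)"
    by (metis diff_add_cancel)
  moreover have "(\<forall>N. \<exists>k\<ge>N. apogee eps M gradU z (k + l)) \<longleftrightarrow> (\<forall>N. \<exists>k\<ge>N. apogee eps M gradU z k)"
    by (metis add.commute add_le_cancel_left diff_add_cancel le_add_diff_inverse)
  moreover have "(\<forall>N. \<exists>k\<le>N. apogee eps M gradU z (k + l)) \<longleftrightarrow> (\<forall>N. \<exists>k\<le>N. apogee eps M gradU z k)"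
    by (metis add_le_cancel_right diff_add_cancel)
  ultimately show ?thesis
    unfolding condR_iff_unbounded_apogees hval_orbit apogee_orbit
    by (simp add: orbit_orbit[abs_def])
qed

lemma inj_orbit: "condR eps M gradU z \<Longrightarrow> inj (orbit eps M gradU z)"
  by (simp add: condR_def)

lemma seg_index_orbit:
  "seg_index eps M gradU (orbit eps M gradU z l) k
    = seg_index eps M gradU z (k + l) - seg_index eps M gradU z l"
proof -
  have "apogee eps M gradU (orbit eps M gradU z l) = (\<lambda>k. apogee eps M gradU z (k + l))"
    by (simp add: fun_eq_iff apogee_orbit)
  then show ?thesis
    by (simp add: seg_index_eq_signed_count signed_count_shift)
qed

lemma seg_index_0 [simp]: "seg_index eps M gradU z 0 = 0"
  by (simp add: seg_index_eq_signed_count)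

lemma segs_eq_image:
  "segs eps M gradU z a b
    = orbit eps M gradU z ` {k. a \<le> seg_index eps M gradU z k \<and> seg_index eps M gradU z k \<le> b}"
  unfolding segs_def segment_def by auto

lemma finite_segs_indices:
  "condR eps M gradU z \<Longrightarrow>
    finite {k. a \<le> seg_index eps M gradU z k \<and> seg_index eps M gradU z k \<le> b}"
  unfolding condR_def seg_index_eq_signed_count by (intro finite_signed_count_band) auto

lemma finite_segs: "condR eps M gradU z \<Longrightarrow> finite (segs eps M gradU z a b)"
  unfolding segs_eq_image using finite_segs_indices by blast

lemma orbit_in_segs_iff:
  "condR eps M gradU z \<Longrightarrow>
    orbit eps M gradU z l \<in> segs eps M gradU z a b \<longleftrightarrow>
    a \<le> seg_index eps M gradU z l \<and> seg_index eps M gradU z l \<le> b"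
  unfolding segs_eq_image by (auto dest: injD[OF inj_orbit])

lemma segs_subset_orbit: "segs eps M gradU z a b \<subseteq> range (orbit eps M gradU z)"
  unfolding segs_eq_image by auto

lemma segs_orbit:
  "segs eps M gradU (orbit eps M gradU z l) a b
    = segs eps M gradU z (a + seg_index eps M gradU z l) (b + seg_index eps M gradU z l)"
proof -
  let ?s = "seg_index eps M gradU z"
  have "(\<lambda>k. k + l) ` {k. a \<le> ?s (k + l) - ?s l \<and> ?s (k + l) - ?s l \<le> b}
      = {m. a + ?s l \<le> ?s m \<and> ?s m \<le> b + ?s l}"
    by (auto intro: image_eqI[of _ _ "_ - l"])
  then show ?thesis
    unfolding segs_eq_image seg_index_orbit orbit_orbit image_image[symmetric, of _ "\<lambda>k. k + l"]
    by simp
qed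

lemma sum_segs:
  "condR eps M gradU z \<Longrightarrow>
    (\<Sum>y\<in>segs eps M gradU z a b. f y)
    = (\<Sum>k | a \<le> seg_index eps M gradU z k \<and> seg_index eps M gradU z k \<le> b. f (orbit eps M gradU z k))"
  unfolding segs_eq_image by (subst sum.reindex) (auto intro: inj_on_subset dest: inj_orbit)

section \<open>Measurability\<close>

lemma seg_index_eq_sum:
  "real_of_int (seg_index eps M gradU z k) =
    (if 0 \<le> k then (\<Sum>i\<in>{0..<k}. of_bool (apogee eps M gradU z i))
     else - (\<Sum>i\<in>{k..<0}. of_bool (apogee eps M gradU z i)))"
proof -
  have "{0..<k} \<inter> {i. apogee eps M gradU z i} = {i. 0 \<le> i \<and> i < k \<and> apogee eps M gradU z i}"
    and "{k..<0} \<inter> {i. apogee eps M gradU z i} = {i. k \<le> i \<and> i < 0 \<and> apogee eps M gradU z i}"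
    by auto
  then show ?thesis
    by (simp add: seg_index_def)
qed

text \<open>A sum over a finite but \<open>z\<close>-dependent set of integers is the pointwise limit of sums
  over the fixed ranges \<open>{-n..n}\<close>.\<close>

lemma borel_measurable_sum_int_set:
  fixes f :: "'a::topological_space \<Rightarrow> int \<Rightarrow> real"
  assumes [measurable]: "Measurable.pred borel R" "\<And>k. Measurable.pred borel (\<lambda>z. Q z k)"
    "\<And>k. (\<lambda>z. f z k) \<in> borel_measurable borel"
    and fin: "\<And>z. R z \<Longrightarrow> finite {k. Q z k}"
  shows "(\<lambda>z. if R z then (\<Sum>k | Q z k. f z k) else 0) \<in> borel_measurable borel"
proof (rule borel_measurable_LIMSEQ_real)
  define G where "G n z = (if R z then (\<Sum>k\<in>{- int n..int n}. if Q z k then f z k else 0) else 0)"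
    for n z
  show "G n \<in> borel_measurable borel" for n
    unfolding G_def by measurable
  fix z
  show "(\<lambda>n. G n z) \<longlonglongrightarrow> (if R z then (\<Sum>k | Q z k. f z k) else 0)"
  proof (cases "R z")
    case True
    define N where "N = Max (insert 0 (abs ` {k. Q z k}))"
    have N: "\<bar>k\<bar> \<le> N" if "Q z k" for k
      unfolding N_def using fin[OF True] that by (intro Max_ge) auto
    have "G n z = (\<Sum>k | Q z k. f z k)" if "nat N \<le> n" for n
    proof -
      have "{k \<in> {- int n..int n}. Q z k} = {k. Q z k}"
        using N that by force
      then show ?thesis
        using True by (simp add: G_def sum.inter_filter[symmetric])
    qed
    then show ?thesis
      using True by (intro tendsto_eventually eventually_sequentiallyI) auto
  qed (simp add: G_def)
qed

lemma borel_measurable_compose_pair: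
  assumes "(\<lambda>(z, z'). w z z') \<in> borel_measurable borel"
    and "continuous_on UNIV f" "continuous_on UNIV g"
  shows "(\<lambda>z. w (f z) (g z) :: real) \<in> borel_measurable borel"
proof -
  have "(\<lambda>z. (f z, g z)) \<in> borel_measurable borel"
    by (intro borel_measurable_continuous_onI continuous_on_Pair assms(2,3))
  from measurable_compose[OF this assms(1)] show ?thesis
    by simp
qed

context
  fixes eps :: real and M :: "real^'n^'n" and gradU :: "real^'n \<Rightarrow> real^'n"
  assumes gradU_cont: "continuous_on UNIV gradU"
begin

lemma borel_measurable_orbit [measurable]:
  "(\<lambda>z. orbit eps M gradU z l) \<in> borel_measurable borel"
  by (rule borel_measurable_continuous_onI[OF continuous_on_orbit[OF gradU_cont]])

lemma borel_measurable_hval [measurable]: "(\<lambda>z. hval eps M gradU z l) \<in> borel_measurable borel"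
proof -
  have "continuous_on UNIV (\<lambda>z. hval eps M gradU z l)"
    unfolding hval_def Let_def
    by (intro continuous_intros continuous_on_compose2[OF gradU_cont]
        continuous_on_orbit[OF gradU_cont]
        bounded_linear.continuous_on[OF matrix_vector_mul_bounded_linear]) auto
  then show ?thesis
    by (rule borel_measurable_continuous_onI)
qed

lemma pred_apogee [measurable]: "Measurable.pred borel (\<lambda>z. apogee eps M gradU z l)"
  unfolding apogee_def by measurable

lemma pred_seg_index_between [measurable]:
  "Measurable.pred borel (\<lambda>z. a \<le> seg_index eps M gradU z k \<and> seg_index eps M gradU z k \<le> b)"
proof -
  have [measurable]: "(\<lambda>z. real_of_int (seg_index eps M gradU z k)) \<in> borel_measurable borel"
    unfolding seg_index_eq_sum by measurable
  have "a \<le> seg_index eps M gradU z k \<and> seg_index eps M gradU z k \<le> b \<longleftrightarrow>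
      real_of_int a \<le> real_of_int (seg_index eps M gradU z k)
      \<and> real_of_int (seg_index eps M gradU z k) \<le> real_of_int b" for z
    by linarith
  then show ?thesis
    by (simp only:) measurable
qed

lemma pred_condR [measurable]: "Measurable.pred borel (condR eps M gradU)"
proof -
  have inj_iff: "inj (orbit eps M gradU z) \<longleftrightarrow>
      (\<forall>k1 k2. k1 \<noteq> k2 \<longrightarrow> 0 < norm (orbit eps M gradU z k1 - orbit eps M gradU z k2))" for z
    unfolding inj_def by auto
  show ?thesis
    unfolding condR_iff_unbounded_apogees inj_iff by measurable
qed

end

section \<open>Metropolis--Hastings on a finite set\<close>

lemma pmf_prop_pmf:
  assumes "finite S" "0 < (\<Sum>x\<in>S. w z x)" "\<And>y. 0 \<le> w z y"
  shows "pmf (prop_pmf w S z) y = (if y \<in> S then w z y / (\<Sum>x\<in>S. w z x) else 0)"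
  unfolding prop_pmf_def
proof (rule pmf_embed_pmf)
  show "0 \<le> (if y \<in> S then w z y / (\<Sum>x\<in>S. w z x) else 0)" for y
    using assms by auto
  have "(\<integral>\<^sup>+ y. ennreal (if y \<in> S then w z y / (\<Sum>x\<in>S. w z x) else 0) \<partial>count_space UNIV)
      = (\<integral>\<^sup>+ y. ennreal (w z y / (\<Sum>x\<in>S. w z x)) * indicator S y \<partial>count_space UNIV)"
    by (intro nn_integral_cong) (auto split: split_indicator)
  also have "\<dots> = (\<Sum>y\<in>S. ennreal (w z y / (\<Sum>x\<in>S. w z x)))"
    using assms(1) by (simp add: nn_integral_indicator_finite)
  also have "\<dots> = ennreal (\<Sum>y\<in>S. w z y / (\<Sum>x\<in>S. w z x))"
    using assms by (intro sum_ennreal) auto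
  also have "(\<Sum>y\<in>S. w z y / (\<Sum>x\<in>S. w z x)) = 1"
    using assms by (simp add: sum_divide_distrib[symmetric])
  finally show "(\<integral>\<^sup>+ y. ennreal (if y \<in> S then w z y / (\<Sum>x\<in>S. w z x) else 0) \<partial>count_space UNIV) = 1"
    by simp
qed

lemma min_1_divide_mult:
  fixes a b :: real
  assumes "0 \<le> a" "0 \<le> b"
  shows "a * min 1 (b / a) = min a b"
  using assms by (cases "a = 0") (simp_all add: min_def field_simps)

context
  fixes M :: "real^'n^'n" and U :: "real^'n \<Rightarrow> real" and w :: "'n state \<Rightarrow> 'n state \<Rightarrow> real"
  assumes w_nonneg: "\<And>z z'. 0 \<le> w z z'"
    and pit_pos: "\<And>z. 0 < pit M U z"
begin

lemma accept_prob_bounds: "0 \<le> accept_prob M U w S z y" "accept_prob M U w S z y \<le> 1"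
proof -
  have "0 \<le> (pit M U y * w y z * (\<Sum>x\<in>S. w z x)) / (pit M U z * w z y * (\<Sum>x\<in>S. w y x))"
    using pit_pos[THEN less_imp_le] w_nonneg
    by (intro divide_nonneg_nonneg mult_nonneg_nonneg sum_nonneg) auto
  then show "0 \<le> accept_prob M U w S z y" "accept_prob M U w S z y \<le> 1"
    unfolding accept_prob_def by auto
qed

lemma pmf_mh_step:
  assumes "finite S" "0 < (\<Sum>x\<in>S. w z x)" "y \<noteq> z"
  shows "pmf (mh_step M U w S z) y
    = (if y \<in> S then w z y / (\<Sum>x\<in>S. w z x) * accept_prob M U w S z y else 0)"
proof -
  let ?a = "accept_prob M U w S z"
  have "pmf (bind_pmf (bernoulli_pmf (?a x)) (\<lambda>acc. return_pmf (if acc then x else z))) y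
      = ?a y * indicator {y} x" for x
    using accept_prob_bounds[of S z] assms(3) by (cases "x = y") (simp_all add: pmf_bind)
  then have "pmf (mh_step M U w S z) y = (\<integral>x. ?a y * indicator {y} x \<partial>measure_pmf (prop_pmf w S z))"
    unfolding mh_step_def pmf_bind[of "prop_pmf w S z"] by simp
  also have "\<dots> = ?a y * pmf (prop_pmf w S z) y"
    by (simp add: measure_pmf_single)
  finally show ?thesis
    using assms w_nonneg by (simp add: pmf_prop_pmf)
qed

lemma set_pmf_mh_step:
  assumes "finite S" "0 < (\<Sum>x\<in>S. w z x)"
  shows "set_pmf (mh_step M U w S z) \<subseteq> insert z S"
proof
  fix y
  assume "y \<in> set_pmf (mh_step M U w S z)"
  then show "y \<in> insert z S"
    using pmf_mh_step[OF assms, of y] by (cases "y = z") (auto simp: set_pmf_iff split: if_splits)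
qed

lemma mh_step_detailed_balance:
  assumes S: "finite S" "z \<in> S" "y \<in> S" "y \<noteq> z"
    and pos: "0 < (\<Sum>x\<in>S. w z x)" "0 < (\<Sum>x\<in>S. w y x)"
  shows "pit M U z * pmf (mh_step M U w S z) y = pit M U y * pmf (mh_step M U w S y) z"
proof -
  define a where "a = pit M U z * w z y / (\<Sum>x\<in>S. w z x)"
  define b where "b = pit M U y * w y z / (\<Sum>x\<in>S. w y x)"
  have "0 \<le> a" "0 \<le> b"
    unfolding a_def b_def using pit_pos[THEN less_imp_le] w_nonneg pos by auto
  have "pit M U z * pmf (mh_step M U w S z) y = a * min 1 (b / a)"
    using S pos by (simp add: pmf_mh_step accept_prob_def a_def b_def field_simps)
  also have "\<dots> = b * min 1 (a / b)"
    using \<open>0 \<le> a\<close> \<open>0 \<le> b\<close> by (simp add: min_1_divide_mult min.commute)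
  also have "\<dots> = pit M U y * pmf (mh_step M U w S y) z"
    using S pos by (simp add: pmf_mh_step accept_prob_def a_def b_def field_simps)
  finally show ?thesis .
qed

end

section \<open>Kernels supported on orbits\<close>

lemma nn_integral_count_space_int_eq_suminf:
  "(\<integral>\<^sup>+ l. g l \<partial>count_space (UNIV::int set)) = (\<Sum>n. g (from_nat_into (UNIV::int set) n))"
proof -
  have "bij_betw (from_nat_into (UNIV::int set)) UNIV UNIV"
    using bij_betw_from_nat_into[of "UNIV::int set"] by simp
  then show ?thesis
    by (simp add: nn_integral_bij_count_space[symmetric] nn_integral_count_space_nat)
qed

lemma borel_measurable_nn_integral_count_space_int:
  assumes "\<And>l. (\<lambda>z. f l z) \<in> borel_measurable M"
  shows "(\<lambda>z. \<integral>\<^sup>+ l. f l z \<partial>count_space (UNIV::int set)) \<in> borel_measurable M"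
  unfolding nn_integral_count_space_int_eq_suminf using assms by measurable

text \<open>Tonelli exchanges the integral with the orbit sum, and the measure-preserving substitution
  \<open>z \<mapsto> T z l\<close> turns the summand at \<open>l\<close> into the summand of the reverse flux at \<open>-l\<close>.\<close>

lemma detailed_balance_orbit_kernel:
  fixes T :: "'a::euclidean_space \<Rightarrow> int \<Rightarrow> 'a" and p :: "'a \<Rightarrow> ennreal"
    and m :: "int \<Rightarrow> 'a \<Rightarrow> ennreal" and P :: "'a \<Rightarrow> 'a pmf"
  assumes T_meas [measurable]: "\<And>l. (\<lambda>z. T z l) \<in> borel_measurable borel"
    and T_preserving: "\<And>l h. h \<in> borel_measurable borel \<Longrightarrow>
      (\<integral>\<^sup>+ z. h (T z l) \<partial>lborel) = (\<integral>\<^sup>+ z. h z \<partial>lborel)"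
    and T_inverse: "\<And>z l. T (T z l) (- l) = z"
    and p_meas [measurable]: "p \<in> borel_measurable borel"
    and m_meas [measurable]: "\<And>l. m l \<in> borel_measurable borel"
    and flux_symmetric: "\<And>z l. p z * m l z = p (T z l) * m (- l) (T z l)"
    and P_eq: "\<And>z B. emeasure (measure_pmf (P z)) B
      = (\<integral>\<^sup>+ l. indicator B (T z l) * m l z \<partial>count_space UNIV)"
  shows "detailed_balance (density lborel p) P"
proof -
  define F where "F A B l = (\<integral>\<^sup>+ z. p z * indicator A z * indicator B (T z l) * m l z \<partial>lborel)"
    for A B l
  have P_meas: "(\<lambda>z. emeasure (measure_pmf (P z)) B) \<in> borel_measurable borel"
    if [measurable]: "B \<in> sets borel" for B
    unfolding P_eq by (rule borel_measurable_nn_integral_count_space_int) measurable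
  have flux: "(\<integral>\<^sup>+ z. indicator A z * emeasure (measure_pmf (P z)) B \<partial>density lborel p)
       = (\<integral>\<^sup>+ l. F A B l \<partial>count_space UNIV)"
    if [measurable]: "A \<in> sets borel" "B \<in> sets borel" for A B
  proof -
    have "(\<integral>\<^sup>+ z. indicator A z * emeasure (measure_pmf (P z)) B \<partial>density lborel p)
        = (\<integral>\<^sup>+ z. p z * (indicator A z * emeasure (measure_pmf (P z)) B) \<partial>lborel)"
      using P_meas[OF that(2)] by (subst nn_integral_density) auto
    also have "\<dots> = (\<integral>\<^sup>+ z. \<integral>\<^sup>+ l. p z * indicator A z * indicator B (T z l) * m l z
        \<partial>count_space UNIV \<partial>lborel)"
      by (intro nn_integral_cong) (simp add: P_eq nn_integral_cmult[symmetric] mult.assoc)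
    also have "\<dots> = (\<integral>\<^sup>+ l. F A B l \<partial>count_space UNIV)"
      unfolding F_def by (rule nn_integral_count_space_nn_integral) auto
    finally show ?thesis .
  qed
  have F_reverse: "F A B l = F B A (- l)" if [measurable]: "A \<in> sets borel" "B \<in> sets borel"
    for A B l
  proof -
    have "F B A (- l) = (\<integral>\<^sup>+ z. p (T z l) * indicator B (T z l) * indicator A (T (T z l) (- l))
        * m (- l) (T z l) \<partial>lborel)"
      unfolding F_def by (rule T_preserving[symmetric]) measurable
    also have "\<dots> = F A B l"
      unfolding F_def T_inverse
      by (intro nn_integral_cong) (metis (no_types, lifting) flux_symmetric mult.assoc mult.commute)
    finally show ?thesis by simp
  qed
  show ?thesis
    unfolding detailed_balance_def
  proof (intro ballI)
    fix A B
    assume "A \<in> sets (density lborel p)" "B \<in> sets (density lborel p)"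
    then have [measurable]: "A \<in> sets borel" "B \<in> sets borel" by auto
    have "(\<integral>\<^sup>+ l. F A B l \<partial>count_space UNIV) = (\<integral>\<^sup>+ l. F B A (- l) \<partial>count_space UNIV)"
      by (intro nn_integral_cong F_reverse) simp_all
    also have "\<dots> = (\<integral>\<^sup>+ l. F B A l \<partial>count_space UNIV)"
      by (rule nn_integral_bij_count_space) (auto intro: bij_betw_byWitness[where f'=uminus])
    finally show "(\<integral>\<^sup>+ z. indicator A z * emeasure (measure_pmf (P z)) B \<partial>density lborel p)
       = (\<integral>\<^sup>+ z. indicator B z * emeasure (measure_pmf (P z)) A \<partial>density lborel p)"
      by (simp add: flux)
  qed
qed


section \<open>The windowed kernel\<close>

definition window :: "real \<Rightarrow> real^'n^'n \<Rightarrow> (real^'n \<Rightarrow> real^'n) \<Rightarrow> nat \<Rightarrow> nat \<Rightarrow> 'n state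
    \<Rightarrow> 'n state set" where
  "window eps M gradU K c z = segs eps M gradU z (- int c) (int K - int c)"

definition windowed_kernel :: "real \<Rightarrow> real^'n^'n \<Rightarrow> (real^'n \<Rightarrow> real) \<Rightarrow> (real^'n \<Rightarrow> real^'n)
    \<Rightarrow> nat \<Rightarrow> ('n state \<Rightarrow> 'n state \<Rightarrow> real) \<Rightarrow> ('n state set \<Rightarrow> bool) \<Rightarrow> 'n state
    \<Rightarrow> 'n state pmf" where
  "windowed_kernel eps M U gradU K w ok z =
     (if condR eps M gradU z then
        bind_pmf (pmf_of_set {0..K}) (\<lambda>c.
          if ok (window eps M gradU K c z) then mh_step M U w (window eps M gradU K c z) z
          else return_pmf z)
      else return_pmf z)"

lemma apogee_kernel_eq_windowed_kernel:
  "apogee_kernel eps M U gradU K w = windowed_kernel eps M U gradU K w (\<lambda>_. True)"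
  by (simp add: fun_eq_iff apogee_kernel_def windowed_kernel_def window_def)

lemma apogee_kernel_cutoff_eq_windowed_kernel:
  "apogee_kernel_cutoff eps M U gradU K w Delta
    = windowed_kernel eps M U gradU K w (\<lambda>S. \<not> Delta \<le> Max (Ham M U ` S) - Min (Ham M U ` S))"
  unfolding fun_eq_iff apogee_kernel_cutoff_def windowed_kernel_def window_def Let_def
  by (auto intro!: bind_pmf_cong)

lemma window_orbit:
  "int c' = int c + seg_index eps M gradU z l \<Longrightarrow>
    window eps M gradU K c' (orbit eps M gradU z l) = window eps M gradU K c z"
  by (simp add: window_def segs_orbit algebra_simps)

lemma orbit_in_window_iff:
  "condR eps M gradU z \<Longrightarrow>
    orbit eps M gradU z l \<in> window eps M gradU K c z \<longleftrightarrow>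
    - int c \<le> seg_index eps M gradU z l \<and> seg_index eps M gradU z l \<le> int K - int c"
  by (simp add: window_def orbit_in_segs_iff)

lemma finite_window: "condR eps M gradU z \<Longrightarrow> finite (window eps M gradU K c z)"
  unfolding window_def by (rule finite_segs)

definition orbit_mass :: "real \<Rightarrow> real^'n^'n \<Rightarrow> (real^'n \<Rightarrow> real) \<Rightarrow> (real^'n \<Rightarrow> real^'n)
    \<Rightarrow> nat \<Rightarrow> ('n state \<Rightarrow> 'n state \<Rightarrow> real) \<Rightarrow> ('n state set \<Rightarrow> bool) \<Rightarrow> int \<Rightarrow> 'n state
    \<Rightarrow> ennreal" where
  "orbit_mass eps M U gradU K w ok l z =
     (if condR eps M gradU z
      then ennreal (pmf (windowed_kernel eps M U gradU K w ok z) (orbit eps M gradU z l))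
      else of_bool (l = 0))"

context
  fixes eps :: real and M :: "real^'n^'n" and U :: "real^'n \<Rightarrow> real"
    and gradU :: "real^'n \<Rightarrow> real^'n" and K :: nat and w :: "'n state \<Rightarrow> 'n state \<Rightarrow> real"
    and ok :: "'n state set \<Rightarrow> bool"
  assumes w_nonneg: "\<And>z z'. 0 \<le> w z z'"
    and w_pos: "\<And>z a b. condR eps M gradU z \<Longrightarrow> a \<le> 0 \<Longrightarrow> 0 \<le> b \<Longrightarrow>
      0 < (\<Sum>z'\<in>segs eps M gradU z a b. w z z')"
    and pit_pos: "\<And>z. 0 < pit M U z"
begin

lemma window_weight_pos:
  "condR eps M gradU z \<Longrightarrow> c \<le> K \<Longrightarrow> 0 < (\<Sum>y\<in>window eps M gradU K c z. w z y)"
  unfolding window_def by (rule w_pos) auto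

lemma pmf_mh_step_window:
  assumes "condR eps M gradU z" "c \<le> K" "y \<noteq> z"
  shows "pmf (mh_step M U w (window eps M gradU K c z) z) y
    = (if y \<in> window eps M gradU K c z
       then w z y / (\<Sum>x\<in>window eps M gradU K c z. w z x)
         * accept_prob M U w (window eps M gradU K c z) z y
       else 0)"
  using assms by (intro pmf_mh_step[where M=M and U=U and w=w] w_nonneg pit_pos finite_window window_weight_pos)

lemma set_pmf_windowed_kernel:
  "set_pmf (windowed_kernel eps M U gradU K w ok z) \<subseteq> range (orbit eps M gradU z)"
proof -
  have z_in: "z \<in> range (orbit eps M gradU z)"
    using rangeI[of "orbit eps M gradU z" 0] by simp
  have "set_pmf (mh_step M U w (window eps M gradU K c z) z) \<subseteq> range (orbit eps M gradU z)"
    if R: "condR eps M gradU z" and "c \<le> K" for c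
    using set_pmf_mh_step[where M=M and U=U and w=w, OF w_nonneg pit_pos
        finite_window[OF R, where K=K and c=c] window_weight_pos[OF R \<open>c \<le> K\<close>]]
      segs_subset_orbit[of eps M gradU z] z_in
    unfolding window_def by blast
  then show ?thesis
    using z_in by (auto simp: windowed_kernel_def split: if_splits; blast)
qed

lemma pmf_windowed_kernel:
  assumes R: "condR eps M gradU z" and "y \<noteq> z"
  shows "pmf (windowed_kernel eps M U gradU K w ok z) y =
    (\<Sum>c\<in>{0..K}. if ok (window eps M gradU K c z)
        then pmf (mh_step M U w (window eps M gradU K c z) z) y else 0) / real (Suc K)"
  using R \<open>y \<noteq> z\<close>
  by (simp add: windowed_kernel_def pmf_bind integral_pmf_of_set if_distrib[of "\<lambda>p. pmf p y"]
      cong: if_cong)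

lemma window_flux_symmetric:
  assumes R: "condR eps M gradU z" and "c \<le> K"
    and z'_in: "z' \<in> window eps M gradU K c z" and "z' \<noteq> z"
  shows "pit M U z * pmf (mh_step M U w (window eps M gradU K c z) z) z'
       = pit M U z' * pmf (mh_step M U w (window eps M gradU K c z) z') z"
proof -
  obtain l where z': "z' = orbit eps M gradU z l"
    using z'_in segs_subset_orbit unfolding window_def by blast
  define c' where "c' = nat (int c + seg_index eps M gradU z l)"
  have "- int c \<le> seg_index eps M gradU z l" "seg_index eps M gradU z l \<le> int K - int c"
    using z'_in unfolding z' orbit_in_window_iff[OF R] by auto
  then have "c' \<le> K" and window_eq: "window eps M gradU K c' z' = window eps M gradU K c z"
    unfolding z' by (auto simp: c'_def intro!: window_orbit)
  have "z \<in> window eps M gradU K c z"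
    using orbit_in_window_iff[OF R, where l=0 and K=K and c=c] \<open>c \<le> K\<close> by simp
  moreover have "0 < (\<Sum>y\<in>window eps M gradU K c z. w z' y)"
    using window_weight_pos[of z' c'] R \<open>c' \<le> K\<close> window_eq by (simp add: z' condR_orbit)
  ultimately show ?thesis
    by (intro mh_step_detailed_balance[where M=M and U=U and w=w] w_nonneg pit_pos
        finite_window[OF R] z'_in \<open>z' \<noteq> z\<close> window_weight_pos[OF R \<open>c \<le> K\<close>])
qed

text \<open>Seen from \<open>z' = z\<^sub>l\<close>, whose segment numbering is shifted by \<open>j\<close>, the window with
  offset \<open>c\<close> around \<open>z\<close> is the window with offset \<open>c + j\<close> around \<open>z'\<close>; the uniform choice of
  \<open>c\<close> makes this relabelling probability-preserving.\<close>

lemma windowed_kernel_flux_symmetric: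
  assumes R: "condR eps M gradU z" and "l \<noteq> 0"
  defines "z' \<equiv> orbit eps M gradU z l"
  shows "pit M U z * pmf (windowed_kernel eps M U gradU K w ok z) z'
       = pit M U z' * pmf (windowed_kernel eps M U gradU K w ok z') z"
proof -
  let ?W = "window eps M gradU K"
  define j where "j = seg_index eps M gradU z l"
  have R': "condR eps M gradU z'"
    unfolding z'_def condR_orbit by (rule R)
  have "z' \<noteq> z"
    unfolding z'_def using injD[OF inj_orbit[OF R], of l 0] \<open>l \<noteq> 0\<close> by auto
  define F where "F c = (if ok (?W c z) then pit M U z * pmf (mh_step M U w (?W c z) z) z' else 0)"
    for c
  define G where "G c = (if ok (?W c z') then pit M U z' * pmf (mh_step M U w (?W c z') z') z else 0)"
    for c
  define C where "C = {c\<in>{0..K}. - int c \<le> j \<and> j \<le> int K - int c}"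
  define C' where "C' = {c\<in>{0..K}. - int c \<le> - j \<and> - j \<le> int K - int c}"
  have z'_in: "z' \<in> ?W c z \<longleftrightarrow> - int c \<le> j \<and> j \<le> int K - int c" for c
    unfolding z'_def j_def using orbit_in_window_iff[OF R] .
  have z_in: "z \<in> ?W c z' \<longleftrightarrow> - int c \<le> - j \<and> - j \<le> int K - int c" for c
    using orbit_in_window_iff[OF R', of "- l"]
    by (simp add: z'_def j_def orbit_orbit seg_index_orbit)
  have "(\<Sum>c\<in>{0..K}. F c) = (\<Sum>c\<in>C. F c)"
    using z'_in \<open>z' \<noteq> z\<close>
    by (intro sum.mono_neutral_right) (auto simp: C_def F_def pmf_mh_step_window[OF R])
  also have "\<dots> = (\<Sum>c\<in>C'. G c)"
  proof (rule sum.reindex_bij_witness[where j="\<lambda>c. nat (int c + j)" and i="\<lambda>c. nat (int c - j)"])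
    fix c
    assume c: "c \<in> C"
    then show "nat (int (nat (int c + j)) - j) = c" "nat (int c + j) \<in> C'"
      by (auto simp: C_def C'_def)
    have "?W (nat (int c + j)) z' = ?W c z"
      unfolding z'_def by (rule window_orbit) (use c in \<open>auto simp: C_def j_def\<close>)
    with c show "G (nat (int c + j)) = F c"
      using window_flux_symmetric[OF R, of c z'] z'_in[of c] \<open>z' \<noteq> z\<close>
      by (simp add: F_def G_def C_def)
  next
    fix c
    assume "c \<in> C'"
    then show "nat (int (nat (int c - j)) + j) = c" "nat (int c - j) \<in> C"
      by (auto simp: C_def C'_def)
  qed
  also have "\<dots> = (\<Sum>c\<in>{0..K}. G c)"
    using z_in \<open>z' \<noteq> z\<close>
    by (intro sum.mono_neutral_left) (auto simp: C'_def G_def pmf_mh_step_window[OF R'])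
  finally show ?thesis
    using \<open>z' \<noteq> z\<close>
    by (simp add: pmf_windowed_kernel[OF R] pmf_windowed_kernel[OF R'] sum_distrib_left
        F_def G_def if_distrib[of "(*) _"] cong: if_cong)
qed

lemma emeasure_windowed_kernel:
  "emeasure (measure_pmf (windowed_kernel eps M U gradU K w ok z)) B
    = (\<integral>\<^sup>+ l. indicator B (orbit eps M gradU z l) * orbit_mass eps M U gradU K w ok l z
        \<partial>count_space UNIV)"
proof (cases "condR eps M gradU z")
  case True
  let ?p = "windowed_kernel eps M U gradU K w ok z"
  let ?o = "orbit eps M gradU z"
  have "emeasure (measure_pmf ?p) B = (\<integral>\<^sup>+ x. ennreal (pmf ?p x) * indicator B x \<partial>count_space UNIV)"
    by (simp add: nn_integral_measure_pmf flip: nn_integral_indicator)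
  also have "\<dots> = (\<integral>\<^sup>+ x. ennreal (pmf ?p x) * indicator B x \<partial>count_space (range ?o))"
  proof (intro nn_integral_count_space_eq)
    fix x
    assume "x \<in> UNIV - range ?o"
    then have "x \<notin> set_pmf ?p"
      using set_pmf_windowed_kernel[where z=z] by blast
    then show "ennreal (pmf ?p x) * indicator B x = 0"
      by (simp add: set_pmf_iff)
  qed auto
  also have "\<dots> = (\<integral>\<^sup>+ l. ennreal (pmf ?p (?o l)) * indicator B (?o l) \<partial>count_space UNIV)"
    using inj_orbit[OF True]
    by (intro nn_integral_bij_count_space[symmetric]) (simp add: bij_betw_def)
  finally show ?thesis
    using True by (simp add: orbit_mass_def mult.commute)
next
  case False
  have "(\<integral>\<^sup>+ l. indicator B (orbit eps M gradU z l) * orbit_mass eps M U gradU K w ok l z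
        \<partial>count_space UNIV)
      = (\<integral>\<^sup>+ l. indicator B z * indicator {0::int} l \<partial>count_space UNIV)"
    using False by (intro nn_integral_cong) (auto simp: orbit_mass_def split: split_indicator)
  with False show ?thesis
    by (simp add: windowed_kernel_def nn_integral_cmult_indicator)
qed

lemma orbit_mass_flux_symmetric:
  "ennreal (pit M U z) * orbit_mass eps M U gradU K w ok l z
    = ennreal (pit M U (orbit eps M gradU z l))
      * orbit_mass eps M U gradU K w ok (- l) (orbit eps M gradU z l)"
proof (cases "l \<noteq> 0 \<and> condR eps M gradU z")
  case True
  then show ?thesis
    using windowed_kernel_flux_symmetric[where z=z and l=l]
      pit_pos[THEN less_imp_le]
    by (simp add: orbit_mass_def condR_orbit orbit_orbit ennreal_mult[symmetric])
next
  case False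
  then show ?thesis
    by (auto simp: orbit_mass_def condR_orbit)
qed

context
  assumes gradU_cont: "continuous_on UNIV gradU"
    and w_meas: "(\<lambda>(z, z'). w z z') \<in> borel_measurable borel"
    and pit_cont: "continuous_on UNIV (pit M U)"
    and ok_meas: "\<And>c. Measurable.pred borel (\<lambda>z. condR eps M gradU z \<and> ok (window eps M gradU K c z))"
begin

lemma pmf_windowed_kernel_orbit:
  assumes R: "condR eps M gradU z" and "l \<noteq> 0"
  defines "I c k \<equiv> - int c \<le> seg_index eps M gradU z k \<and> seg_index eps M gradU z k \<le> int K - int c"
    and "z' \<equiv> orbit eps M gradU z l"
  shows "pmf (windowed_kernel eps M U gradU K w ok z) z' =
    (\<Sum>c\<in>{0..K}. if ok (window eps M gradU K c z) \<and> I c l then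
        w z z' / (\<Sum>k | I c k. w z (orbit eps M gradU z k))
        * min 1 (pit M U z' * w z' z * (\<Sum>k | I c k. w z (orbit eps M gradU z k))
          / (pit M U z * w z z' * (\<Sum>k | I c k. w z' (orbit eps M gradU z k))))
      else 0) / real (Suc K)"
proof -
  have "z' \<noteq> z"
    unfolding z'_def using injD[OF inj_orbit[OF R], of l 0] \<open>l \<noteq> 0\<close> by auto
  moreover have "(\<Sum>y\<in>window eps M gradU K c z. f y) = (\<Sum>k | I c k. f (orbit eps M gradU z k))"
    for c and f :: "'n state \<Rightarrow> real"
    unfolding window_def I_def by (rule sum_segs[OF R])
  moreover have "z' \<in> window eps M gradU K c z \<longleftrightarrow> I c l" for c
    unfolding z'_def I_def by (rule orbit_in_window_iff[OF R])
  ultimately show ?thesis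
    by (simp add: pmf_windowed_kernel[OF R] accept_prob_def
        pmf_mh_step_window[OF R] cong: if_cong)
      (auto intro!: sum.cong)
qed

lemma borel_measurable_orbit_mass_nonzero:
  assumes "l \<noteq> 0"
  shows "orbit_mass eps M U gradU K w ok l \<in> borel_measurable borel"
proof -
  let ?R = "condR eps M gradU"
  let ?o = "orbit eps M gradU"
  define I where "I c z k \<longleftrightarrow>
    - int c \<le> seg_index eps M gradU z k \<and> seg_index eps M gradU z k \<le> int K - int c" for c z k
  define W where "W c z = (if ?R z then (\<Sum>k | I c z k. w z (?o z k)) else 0)" for c z
  define W' where "W' c z = (if ?R z then (\<Sum>k | I c z k. w (?o z l) (?o z k)) else 0)" for c z
  define E where "E z = (\<Sum>c\<in>{0..K}.
      if (?R z \<and> ok (window eps M gradU K c z)) \<and> I c z l then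
        w z (?o z l) / W c z
        * min 1 (pit M U (?o z l) * w (?o z l) z * W c z / (pit M U z * w z (?o z l) * W' c z))
      else 0) / real (Suc K)" for z
  note [measurable] = pred_condR[OF gradU_cont] borel_measurable_orbit[OF gradU_cont] ok_meas
    borel_measurable_continuous_onI[OF pit_cont]
  have [measurable]: "Measurable.pred borel (\<lambda>z. I c z k)" for c k
    unfolding I_def by (rule pred_seg_index_between[OF gradU_cont])
  have [measurable]: "(\<lambda>z. w (?o z k1) (?o z k2)) \<in> borel_measurable borel" for k1 k2
    by (rule borel_measurable_compose_pair[OF w_meas]) (simp_all add: continuous_on_orbit gradU_cont)
  have [measurable]: "(\<lambda>z. w z (?o z k)) \<in> borel_measurable borel"
    "(\<lambda>z. w (?o z k) z) \<in> borel_measurable borel" for k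
    using borel_measurable_compose_pair[OF w_meas continuous_on_id continuous_on_orbit[OF gradU_cont]]
      borel_measurable_compose_pair[OF w_meas continuous_on_orbit[OF gradU_cont] continuous_on_id]
    by auto
  have "?R z \<Longrightarrow> finite {k. I c z k}" for c z
    unfolding I_def by (rule finite_segs_indices)
  then have [measurable]: "W c \<in> borel_measurable borel" "W' c \<in> borel_measurable borel" for c
    unfolding W_def W'_def by (intro borel_measurable_sum_int_set; measurable)+
  have [measurable]: "E \<in> borel_measurable borel"
    unfolding E_def by measurable
  have "orbit_mass eps M U gradU K w ok l = (\<lambda>z. if ?R z then ennreal (E z) else 0)"
    using assms by (intro ext)
      (simp add: orbit_mass_def E_def W_def W'_def I_def pmf_windowed_kernel_orbit cong: if_cong)
  then show ?thesis
    by simp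
qed

text \<open>The mass of staying put is one minus the (measurable) mass of all moves.\<close>

lemma borel_measurable_orbit_mass: "orbit_mass eps M U gradU K w ok l \<in> borel_measurable borel"
proof (cases "l = 0")
  case True
  let ?m = "orbit_mass eps M U gradU K w ok"
  define g where "g z = (\<integral>\<^sup>+ k. (if k = 0 then 0 else ?m k z) \<partial>count_space UNIV)" for z
  have "(\<lambda>z. if k = 0 then 0 else ?m k z) \<in> borel_measurable borel" for k
    by (cases "k = 0") (simp_all add: borel_measurable_orbit_mass_nonzero)
  then have [measurable]: "g \<in> borel_measurable borel"
    unfolding g_def by (rule borel_measurable_nn_integral_count_space_int)
  have "?m 0 z = (if condR eps M gradU z then 1 - g z else 1)" for z
  proof (cases "condR eps M gradU z")
    case True
    have "1 = emeasure (measure_pmf (windowed_kernel eps M U gradU K w ok z)) UNIV"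
      by simp
    also have "\<dots> = (\<integral>\<^sup>+ k. ?m k z \<partial>count_space UNIV)"
      using emeasure_windowed_kernel[where B=UNIV] by simp
    also have "\<dots> = (\<integral>\<^sup>+ k. ?m 0 z * indicator {0} k + (if k = 0 then 0 else ?m k z)
        \<partial>count_space UNIV)"
      by (intro nn_integral_cong) (simp split: split_indicator)
    also have "\<dots> = ?m 0 z + g z"
      unfolding g_def by (subst nn_integral_add) (auto simp: nn_integral_cmult_indicator)
    finally have "?m 0 z + g z = 1" ..
    then have "?m 0 z = 1 - g z"
      by (metis add_diff_cancel_right' ennreal_add_diff_cancel_right ennreal_add_eq_top
          ennreal_one_neq_top)
    with True show ?thesis
      by simp
  qed (simp add: orbit_mass_def)
  then have "?m 0 = (\<lambda>z. if condR eps M gradU z then 1 - g z else 1)"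
    by (intro ext)
  then show ?thesis
    using True pred_condR[OF gradU_cont] by simp
qed (rule borel_measurable_orbit_mass_nonzero)

lemma detailed_balance_windowed_kernel:
  "detailed_balance (pit_measure M U) (windowed_kernel eps M U gradU K w ok)"
  unfolding pit_measure_def
proof (rule detailed_balance_orbit_kernel[where T="orbit eps M gradU" and m="orbit_mass eps M U gradU K w ok"])
  show "(\<lambda>z. orbit eps M gradU z l) \<in> borel_measurable borel" for l
    by (rule borel_measurable_orbit[OF gradU_cont])
  show "(\<integral>\<^sup>+ z. h (orbit eps M gradU z l) \<partial>lborel) = (\<integral>\<^sup>+ z. h z \<partial>lborel)"
    if "h \<in> borel_measurable borel" for l h
    by (rule nn_integral_orbit[OF gradU_cont that])
  show "orbit eps M gradU (orbit eps M gradU z l) (- l) = z" for z l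
    by (simp add: orbit_orbit)
  show "(\<lambda>z. ennreal (pit M U z)) \<in> borel_measurable borel"
    using borel_measurable_continuous_onI[OF pit_cont] by measurable
  show "orbit_mass eps M U gradU K w ok l \<in> borel_measurable borel" for l
    by (rule borel_measurable_orbit_mass)
  show "ennreal (pit M U z) * orbit_mass eps M U gradU K w ok l z
      = ennreal (pit M U (orbit eps M gradU z l))
        * orbit_mass eps M U gradU K w ok (- l) (orbit eps M gradU z l)" for z l
    by (rule orbit_mass_flux_symmetric)
  show "emeasure (measure_pmf (windowed_kernel eps M U gradU K w ok z)) B
      = (\<integral>\<^sup>+ l. indicator B (orbit eps M gradU z l) * orbit_mass eps M U gradU K w ok l z
          \<partial>count_space UNIV)" for z B
    by (rule emeasure_windowed_kernel)
qed

end

end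

section \<open>Energy cutoff and the main theorem\<close>

lemma le_Max_diff_Min_iff:
  fixes H :: "'a \<Rightarrow> real"
  assumes "finite S" "S \<noteq> {}"
  shows "D \<le> Max (H ` S) - Min (H ` S) \<longleftrightarrow> (\<exists>x\<in>S. \<exists>y\<in>S. D \<le> H x - H y)"
proof
  assume "D \<le> Max (H ` S) - Min (H ` S)"
  moreover have "Max (H ` S) \<in> H ` S" "Min (H ` S) \<in> H ` S"
    using assms by auto
  ultimately show "\<exists>x\<in>S. \<exists>y\<in>S. D \<le> H x - H y"
    by force
next
  assume "\<exists>x\<in>S. \<exists>y\<in>S. D \<le> H x - H y"
  then obtain x y where "x \<in> S" "y \<in> S" "D \<le> H x - H y"
    by blast
  moreover have "H x \<le> Max (H ` S)" "Min (H ` S) \<le> H y"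
    using assms \<open>x \<in> S\<close> \<open>y \<in> S\<close> by auto
  ultimately show "D \<le> Max (H ` S) - Min (H ` S)"
    by linarith
qed

lemma continuous_on_Ham:
  assumes "continuous_on UNIV U"
  shows "continuous_on UNIV (Ham M U)"
proof -
  have U_comp: "continuous_on UNIV (\<lambda>z. U (f z))" if "continuous_on UNIV f"
    for f :: "'z::topological_space \<Rightarrow> _"
    using continuous_on_compose2[OF assms that] by auto
  show ?thesis
    unfolding Ham_def[abs_def] divide_inverse
    by (intro continuous_intros U_comp bounded_linear.continuous_on[OF matrix_vector_mul_bounded_linear])
qed

lemma continuous_on_pit:
  assumes "continuous_on UNIV U"
  shows "continuous_on UNIV (pit M U)"
proof -
  have U_comp: "continuous_on UNIV (\<lambda>z. U (f z))" if "continuous_on UNIV f"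
    for f :: "'z::topological_space \<Rightarrow> _"
    using continuous_on_compose2[OF assms that] by auto
  show ?thesis
    unfolding pit_def[abs_def] rho_def divide_inverse
    by (intro continuous_intros U_comp bounded_linear.continuous_on[OF matrix_vector_mul_bounded_linear])
qed

lemma pred_energy_cutoff:
  fixes gradU :: "real^'n \<Rightarrow> real^'n"
  assumes gradU_cont: "continuous_on UNIV gradU" and U_cont: "continuous_on UNIV U"
  shows "Measurable.pred borel (\<lambda>z. condR eps M gradU z \<and>
      \<not> Delta \<le> Max (Ham M U ` window eps M gradU K c z) - Min (Ham M U ` window eps M gradU K c z))"
proof -
  let ?o = "orbit eps M gradU"
  let ?H = "Ham M U"
  define I where "I z k \<longleftrightarrow>
    - int c \<le> seg_index eps M gradU z k \<and> seg_index eps M gradU z k \<le> int K - int c" for z k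
  note [measurable] = pred_condR[OF gradU_cont] borel_measurable_orbit[OF gradU_cont]
    borel_measurable_continuous_onI[OF continuous_on_Ham[OF U_cont]]
  have [measurable]: "Measurable.pred borel (\<lambda>z. I z k)" for k
    unfolding I_def by (rule pred_seg_index_between[OF gradU_cont])
  have "Delta \<le> Max (?H ` window eps M gradU K c z) - Min (?H ` window eps M gradU K c z)
      \<longleftrightarrow> (\<exists>k1 k2. I z k1 \<and> I z k2 \<and> Delta \<le> ?H (?o z k1) - ?H (?o z k2))
        \<or> (\<forall>k. \<not> I z k) \<and> Delta \<le> Max (?H ` {}) - Min (?H ` {})"
    if "condR eps M gradU z" for z
  proof -
    have window: "window eps M gradU K c z = ?o z ` {k. I z k}"
      unfolding window_def segs_eq_image I_def ..
    show ?thesis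
    proof (cases "\<exists>k. I z k")
      case True
      have "finite (?o z ` {k. I z k})" "?o z ` {k. I z k} \<noteq> {}"
        using finite_window[OF that, where K=K and c=c] True unfolding window by auto
      from le_Max_diff_Min_iff[OF this, of Delta ?H] True show ?thesis
        unfolding window by auto
    qed (simp add: window)
  qed
  then have "(condR eps M gradU z \<and>
      \<not> Delta \<le> Max (?H ` window eps M gradU K c z) - Min (?H ` window eps M gradU K c z))
    \<longleftrightarrow> (condR eps M gradU z \<and>
      \<not> ((\<exists>k1 k2. I z k1 \<and> I z k2 \<and> Delta \<le> ?H (?o z k1) - ?H (?o z k2))
        \<or> (\<forall>k. \<not> I z k) \<and> Delta \<le> Max (?H ` {}) - Min (?H ` {})))" for z
    by blast
  then show ?thesis
    by (simp only:) measurable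
qed

text \<open>The normalising constant can only fail to be positive if \<open>det M \<le> 0\<close>, which positive
  definiteness excludes; rather than proving that, note that the density is then nowhere positive
  (\<open>sqrt\<close> is odd and division by zero yields zero), so the target measure vanishes.\<close>

lemma pit_measure_null:
  assumes "\<not> 0 < sqrt ((2 * pi) ^ CARD('n) * det (M :: real^'n^'n))"
  shows "pit_measure M U = null_measure lborel"
proof -
  have "pit M U z \<le> 0" for z
    using assms unfolding pit_def rho_def
    by (intro mult_nonneg_nonpos divide_nonneg_nonpos) auto
  then have "(\<lambda>z. ennreal (pit M U z)) = (\<lambda>_. 0)"
    by (simp add: fun_eq_iff ennreal_eq_0_iff)
  then show ?thesis
    unfolding pit_measure_def by (simp add: null_measure_eq_density)
qed

theorem mainTheorem1:
  fixes eps :: real and K :: nat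
    and U :: "real^'n \<Rightarrow> real" and gradU :: "real^'n \<Rightarrow> real^'n"
    and M :: "real^'n^'n"
    and w :: "'n state \<Rightarrow> 'n state \<Rightarrow> real"
  assumes eps_pos: "eps > 0"
    and U_deriv: "\<And>x. (U has_derivative (\<lambda>h. gradU x \<bullet> h)) (at x)"
    and gradU_cont: "continuous_on UNIV gradU"
    and U_norm: "((\<lambda>x. exp (- U x)) has_integral 1) UNIV"
    and M_sym: "transpose M = M"
    and M_pd: "\<And>v. v \<noteq> 0 \<Longrightarrow> v \<bullet> (M *v v) > 0"
    and w_nonneg: "\<And>z z'. w z z' \<ge> 0"
    and w_meas: "(\<lambda>(z, z'). w z z') \<in> borel_measurable borel"
    and w_pos: "\<And>z a b. condR eps M gradU z \<Longrightarrow> a \<le> 0 \<Longrightarrow> 0 \<le> b \<Longrightarrow>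
                  (\<Sum>z'\<in>segs eps M gradU z a b. w z z') > 0"
    and R_ae: "AE z in pit_measure M U. condR eps M gradU z"
  shows "detailed_balance (pit_measure M U) (apogee_kernel eps M U gradU K w)
       \<and> (\<forall>Delta>0. detailed_balance (pit_measure M U) (apogee_kernel_cutoff eps M U gradU K w Delta))"
proof -
  \<comment> \<open>Both kernels fix every state violating (R), so they are reversible without \<open>R_ae\<close>.\<close>
  have U_cont: "continuous_on UNIV U"
    using U_deriv has_derivative_continuous continuous_at_imp_continuous_on by blast
  show ?thesis
  proof (cases "0 < sqrt ((2 * pi) ^ CARD('n) * det M)")
    case True
    then have pit_pos: "0 < pit M U z" for z
      by (simp add: pit_def rho_def)
    have "detailed_balance (pit_measure M U) (windowed_kernel eps M U gradU K w ok)"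
      if "\<And>c. Measurable.pred borel (\<lambda>z. condR eps M gradU z \<and> ok (window eps M gradU K c z))"
      for ok
      using detailed_balance_windowed_kernel[OF w_nonneg w_pos pit_pos gradU_cont w_meas
          continuous_on_pit[OF U_cont] that] .
    then show ?thesis
      unfolding apogee_kernel_eq_windowed_kernel apogee_kernel_cutoff_eq_windowed_kernel
      using pred_condR[OF gradU_cont] pred_energy_cutoff[OF gradU_cont U_cont] by simp
  next
    case False
    then show ?thesis
      by (simp add: pit_measure_null detailed_balance_def nn_integral_null_measure)
  qed
qed

end
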